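(* Let $k$ be a non-archimedean local field of residue characteristic $2$ and let $B(x)=\sum_{i=1}^n a_i x_i^2$ be an anisotropic diagonal quadratic form on $k^n$ with $0\le\operatorname{ord} a_i\le 1$ for all $i$. Let $z=q^{-\beta}$, $w=zq^{-1}$, $u=z^2q^{-n}$, and let $T\ge0$ be an integer. Then \[ X^B(\beta;\varpi^{2T}) = \sum_{0\le\ell<2T+e+1} z^\ell X^B_\ell(\varpi^{2T}) + \frac{z^{2T+e+1}}{1-w}\,X^B_{2T+e+1}(\varpi^{2T}), \] \[ X^B(\beta;0) = \sum_{0\le\ell<e} z^\ell X^B_\ell(0) + \frac{z^e}{1-u}\,X^B_e(0) + \frac{z^{e+1}}{1-u}\,X^B_{e+1}(0). \]
   Context: $k$ has ring of integers $\mathfrak o$, uniformizer $\varpi$, residue field of cardinality $q$, absolute value normalized by $|\varpi|=q^{-1}$, normalized valuation $\operatorname{ord}$, and $e=\operatorname{ord}(2)$ is the ramification index. On $\mathfrak o^n$ use the additive Haar measure of total mass $1$. For $\rho\in\mathfrak o$ and integer $\ell\ge0$ set $X_\ell^B(\rho)=\operatorname{meas}\{x\in\mathfrak o^n: B(x)-\rho\in 2\varpi^\ell\mathfrak o\}$ and $X^B(\beta;\rho)=\sum_{\ell\ge0} z^\ell X^B_\ell(\rho)$ with $z=q^{-\beta}$ (a power series in $z$, convergent for $\operatorname{Re}\beta>0$). *)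

theory Defs
  imports "HOL-Analysis.Analysis"
begin

text \<open>A normalized discrete valuation on a field (values on 0 are irrelevant junk).\<close>
definition discrete_valuation :: "('a::field \<Rightarrow> int) \<Rightarrow> bool" where
  "discrete_valuation v \<longleftrightarrow>
     (\<forall>x y. x \<noteq> 0 \<longrightarrow> y \<noteq> 0 \<longrightarrow> v (x * y) = v x + v y) \<and>
     (\<forall>x y. x \<noteq> 0 \<longrightarrow> y \<noteq> 0 \<longrightarrow> x + y \<noteq> 0 \<longrightarrow> min (v x) (v y) \<le> v (x + y)) \<and>
     (\<forall>m. \<exists>x. x \<noteq> 0 \<and> v x = m)"

definition val_ideal :: "('a::field \<Rightarrow> int) \<Rightarrow> int \<Rightarrow> 'a set" where
  "val_ideal v m = {x. x = 0 \<or> m \<le> v x}"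

definition val_ring :: "('a::field \<Rightarrow> int) \<Rightarrow> 'a set" where
  "val_ring v = val_ideal v 0"

definition residue_rel :: "('a::field \<Rightarrow> int) \<Rightarrow> ('a \<times> 'a) set" where
  "residue_rel v = {(x, y). x \<in> val_ring v \<and> y \<in> val_ring v \<and> x - y \<in> val_ideal v 1}"

definition residue_field :: "('a::field \<Rightarrow> int) \<Rightarrow> 'a set set" where
  "residue_field v = val_ring v // residue_rel v"

definition val_complete :: "('a::field \<Rightarrow> int) \<Rightarrow> bool" where
  "val_complete v \<longleftrightarrow>
     (\<forall>s::nat \<Rightarrow> 'a. (\<forall>m. \<exists>N. \<forall>i\<ge>N. \<forall>j\<ge>N. s i - s j \<in> val_ideal v m) \<longrightarrow>
        (\<exists>L. \<forall>m. \<exists>N. \<forall>i\<ge>N. s i - L \<in> val_ideal v m))"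

definition nonarch_local_field :: "('a::field \<Rightarrow> int) \<Rightarrow> bool" where
  "nonarch_local_field v \<longleftrightarrow>
     discrete_valuation v \<and> val_complete v \<and> finite (residue_field v)"

definition int_vectors :: "('a::field \<Rightarrow> int) \<Rightarrow> nat \<Rightarrow> (nat \<Rightarrow> 'a) set" where
  "int_vectors v n = PiE {..<n} (\<lambda>_. val_ring v)"

definition vec_ball :: "('a::field \<Rightarrow> int) \<Rightarrow> nat \<Rightarrow> (nat \<Rightarrow> 'a) \<Rightarrow> nat \<Rightarrow> (nat \<Rightarrow> 'a) set" where
  "vec_ball v n a m = {x \<in> int_vectors v n. \<forall>i<n. x i - a i \<in> val_ideal v (int m)}"

text \<open>M is the additive Haar measure on o^n of total mass 1: a measure on the Borel
  sets of o^n (generated by the balls) which is translation invariant and has mass 1.\<close>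
definition haar_prob :: "('a::field \<Rightarrow> int) \<Rightarrow> nat \<Rightarrow> (nat \<Rightarrow> 'a) measure \<Rightarrow> bool" where
  "haar_prob v n M \<longleftrightarrow>
     space M = int_vectors v n \<and>
     sets M = sigma_sets (int_vectors v n) {vec_ball v n a m | a m. a \<in> int_vectors v n} \<and>
     emeasure M (space M) = 1 \<and>
     (\<forall>A\<in>sets M. \<forall>b\<in>int_vectors v n.
        emeasure M ((\<lambda>x. \<lambda>i\<in>{..<n}. x i + b i) ` A) = emeasure M A)"

definition diag_form :: "nat \<Rightarrow> (nat \<Rightarrow> 'a::field) \<Rightarrow> (nat \<Rightarrow> 'a) \<Rightarrow> 'a" where
  "diag_form n a x = (\<Sum>i<n. a i * x i ^ 2)"

definition XB :: "('a::field \<Rightarrow> int) \<Rightarrow> 'a \<Rightarrow> nat \<Rightarrow> (nat \<Rightarrow> 'a) \<Rightarrow> (nat \<Rightarrow> 'a) measure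
    \<Rightarrow> 'a \<Rightarrow> nat \<Rightarrow> real" where
  "XB v uf n a M \<rho> l =
     measure M {x \<in> int_vectors v n. diag_form n a x - \<rho> \<in> (\<lambda>t. 2 * uf ^ l * t) ` val_ring v}"

end

theory Submission
  imports Defs
begin

text \<open>
  Both identities are summations of eventually geometric series, so everything rests on how
  \<open>X\<^sub>\<ell>\<close> behaves for large \<open>\<ell>\<close>.

  For \<open>\<rho> = \<varpi>\<^sup>2\<^sup>T\<close> and \<open>\<ell> \<ge> 2T + e + 1\<close>, split the set
  \<open>{x. B x \<equiv> \<rho> mod 2\<varpi>\<^sup>\<ell>}\<close> into \<open>q\<close> fibres according to the residue of
  \<open>(B x - \<rho>) / 2\<varpi>\<^sup>\<ell>\<close>. Near any point of the set some \<open>a\<^sub>i x\<^sub>i\<close> has valuation at most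
  \<open>T + 1\<close>, so translating \<open>x\<^sub>i\<close> by \<open>\<varpi>\<^sup>k c\<close> changes this residue by \<open>u c\<close> with a unit \<open>u\<close>;
  translations preserve Haar measure, hence all fibres have equal measure and
  \<open>X\<^sub>\<ell>\<^sub>+\<^sub>1 = X\<^sub>\<ell> / q\<close>.

  For \<open>\<rho> = 0\<close>, if \<open>B y \<equiv> 0 mod 4\<varpi>\<^sup>2\<close> and some \<open>y\<^sub>i\<close> were a unit, then \<open>-B y / a\<^sub>i y\<^sub>i\<^sup>2\<close> is
  divisible by \<open>4\<varpi>\<close>, so \<open>1 - B y / a\<^sub>i y\<^sub>i\<^sup>2\<close> is a square by Hensel's lemma, and rescaling
  \<open>y\<^sub>i\<close> by its square root gives a nontrivial zero of \<open>B\<close>. Hence for \<open>\<ell> \<ge> e\<close> the level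
  \<open>\<ell> + 2\<close> set is \<open>\<varpi>\<close> times the level \<open>\<ell>\<close> set and \<open>X\<^sub>\<ell>\<^sub>+\<^sub>2 = q\<^sup>-\<^sup>n X\<^sub>\<ell>\<close>.
\<close>

lemma summable_power_mult_bounded:
  fixes X :: "nat \<Rightarrow> real" and z :: complex
  assumes z: "norm z < 1" and bounded: "\<And>l. \<bar>X l\<bar> \<le> C"
  shows "summable (\<lambda>l. z ^ l * of_real (X l))"
proof (rule summable_comparison_test)
  show "\<exists>N. \<forall>l\<ge>N. norm (z ^ l * of_real (X l)) \<le> C * norm z ^ l"
  proof (intro exI allI impI)
    fix l
    show "norm (z ^ l * of_real (X l)) \<le> C * norm z ^ l"
      using mult_right_mono[OF bounded[of l], of "norm z ^ l"] by (simp add: norm_mult norm_power mult.commute)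
  qed
  show "summable (\<lambda>l. C * norm z ^ l)"
    using z by (intro summable_mult summable_geometric) simp
qed

text \<open>Summing the groups of \<open>p\<close> consecutive terms from \<open>L\<close> on turns the series into a
  geometric series with ratio \<open>z\<^sup>p / Q\<close>.\<close>

lemma sums_eventually_periodic_geometric:
  fixes X :: "nat \<Rightarrow> real" and z :: complex
  assumes z: "norm z < 1" and Q: "1 \<le> Q" and p: "0 < p"
    and bounded: "\<And>l. \<bar>X l\<bar> \<le> C"
    and rec: "\<forall>l\<ge>L. X (l + p) = X l / Q"
  shows "(\<lambda>l. z ^ l * of_real (X l)) sums
           ((\<Sum>l<L. z ^ l * of_real (X l))
            + (\<Sum>d<p. z ^ (L + d) * of_real (X (L + d))) / (1 - z ^ p / of_real Q))"
proof -
  define f where "f = (\<lambda>l. z ^ l * of_real (X l))"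
  define c where "c = (\<Sum>d<p. f (L + d))"
  let ?u = "z ^ p / of_real Q"
  have "norm ?u \<le> norm z ^ p"
    using Q by (simp add: norm_divide norm_power divide_le_eq mult_le_cancel_left1)
  also have "\<dots> < 1"
    using z p by (simp add: power_less_one_iff)
  finally have u: "norm ?u < 1" .
  have X_iter: "X (j * p + L + d) = X (L + d) / Q ^ j" for j d
  proof (induction j)
    case (Suc j)
    have "X (Suc j * p + L + d) = X (j * p + L + d) / Q"
      using rec[rule_format, of "j * p + L + d"] by (simp add: algebra_simps)
    then show ?case
      using Suc by (simp add: divide_divide_eq_left mult.commute)
  qed simp
  have group: "(\<Sum>i\<in>{j * p..<j * p + p}. f (i + L)) = c * ?u ^ j" for j
  proof -
    have "(\<Sum>i\<in>{j * p..<j * p + p}. f (i + L)) = (\<Sum>d<p. f (d + j * p + L))"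
      using sum.shift_bounds_nat_ivl[of "\<lambda>i. f (i + L)" 0 "j * p" p]
      by (simp add: lessThan_atLeast0 add.commute)
    also have "\<dots> = (\<Sum>d<p. f (L + d) * ?u ^ j)"
    proof (rule sum.cong[OF refl])
      fix d
      have "X (d + j * p + L) = X (L + d) / Q ^ j"
        using X_iter[of j d] by (simp add: add_ac)
      moreover have "z ^ (d + j * p + L) = z ^ (L + d) * (z ^ p) ^ j"
        by (simp add: power_add power_mult mult_ac flip: power_mult)
      ultimately show "f (d + j * p + L) = f (L + d) * ?u ^ j"
        by (simp add: f_def power_divide)
    qed
    finally show ?thesis
      by (simp add: c_def sum_distrib_right)
  qed
  have "summable f"
    unfolding f_def by (rule summable_power_mult_bounded[where X = X, OF z bounded])
  then have shifted: "summable (\<lambda>i. f (i + L))"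
    by (rule summable_iff_shift[THEN iffD2])
  have "(\<lambda>j. c * ?u ^ j) sums (\<Sum>i. f (i + L))"
    using sums_group[OF summable_sums[OF shifted] p] unfolding group .
  moreover have "(\<lambda>j. c * ?u ^ j) sums (c / (1 - ?u))"
    using sums_mult[OF geometric_sums[OF u], of c] by simp
  ultimately have "(\<lambda>i. f (i + L)) sums (c / (1 - ?u))"
    using shifted sums_unique2 summable_sums by metis
  then have "f sums (c / (1 - ?u) + (\<Sum>l<L. f l))"
    by (simp add: sums_iff_shift)
  then show ?thesis
    unfolding c_def f_def by (simp only: add.commute)
qed

locale valued_field =
  fixes v :: "'a::field \<Rightarrow> int"
  assumes discrete_valuation: "discrete_valuation v"
begin

abbreviation I where "I \<equiv> val_ideal v"

lemma val_mult: "x \<noteq> 0 \<Longrightarrow> y \<noteq> 0 \<Longrightarrow> v (x * y) = v x + v y"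
  using discrete_valuation unfolding discrete_valuation_def by blast

lemma val_add: "x \<noteq> 0 \<Longrightarrow> y \<noteq> 0 \<Longrightarrow> x + y \<noteq> 0 \<Longrightarrow> min (v x) (v y) \<le> v (x + y)"
  using discrete_valuation unfolding discrete_valuation_def by blast

lemma val_one [simp]: "v 1 = 0"
  using val_mult[of 1 1] by simp

lemma val_inverse: "x \<noteq> 0 \<Longrightarrow> v (inverse x) = - v x"
  using val_mult[of x "inverse x"] by simp

lemma val_divide: "x \<noteq> 0 \<Longrightarrow> y \<noteq> 0 \<Longrightarrow> v (x / y) = v x - v y"
  by (simp add: divide_inverse val_mult val_inverse)

lemma val_minus_one [simp]: "v (-1) = 0"
  using val_mult[of "-1" "-1"] by simp

lemma val_uminus [simp]: "v (- x) = v x"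
  by (cases "x = 0") (use val_mult[of "-1" x] in simp_all)

lemma val_power: "x \<noteq> 0 \<Longrightarrow> v (x ^ k) = int k * v x"
  by (induction k) (auto simp: val_mult algebra_simps)

lemma val_ideal_iff: "x \<in> I m \<longleftrightarrow> x = 0 \<or> m \<le> v x"
  by (simp add: val_ideal_def)

lemma zero_in_val_ideal [simp]: "0 \<in> I m"
  by (simp add: val_ideal_iff)

lemma in_val_ideal_val: "x \<in> I (v x)"
  by (simp add: val_ideal_iff)

lemma val_ideal_mono: "x \<in> I m \<Longrightarrow> k \<le> m \<Longrightarrow> x \<in> I k"
  by (auto simp: val_ideal_iff)

lemma val_ideal_add: "x \<in> I m \<Longrightarrow> y \<in> I m \<Longrightarrow> x + y \<in> I m"
  using val_add[of x y] by (cases "x = 0 \<or> y = 0 \<or> x + y = 0") (auto simp: val_ideal_iff)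

lemma val_ideal_uminus_iff [simp]: "- x \<in> I m \<longleftrightarrow> x \<in> I m"
  by (auto simp: val_ideal_iff)

lemma val_ideal_diff: "x \<in> I m \<Longrightarrow> y \<in> I m \<Longrightarrow> x - y \<in> I m"
  using val_ideal_add[of x m "-y"] by simp

lemma val_ideal_diff_commute: "x - y \<in> I m \<longleftrightarrow> y - x \<in> I m"
  using val_ideal_uminus_iff[of "x - y" m] by simp

lemma val_ideal_mult: "x \<in> I m \<Longrightarrow> y \<in> I k \<Longrightarrow> x * y \<in> I (m + k)"
  by (cases "x = 0"; cases "y = 0") (auto simp: val_ideal_iff val_mult)

lemma val_ideal_sum: "(\<And>i. i \<in> S \<Longrightarrow> f i \<in> I m) \<Longrightarrow> sum f S \<in> I m"
  by (induction S rule: infinite_finite_induct) (auto intro: val_ideal_add)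

lemma val_ideal_mult_right_iff: "y \<noteq> 0 \<Longrightarrow> x * y \<in> I m \<longleftrightarrow> x \<in> I (m - v y)"
  by (cases "x = 0") (auto simp: val_ideal_iff val_mult)

lemma in_all_val_ideals_imp_zero: "(\<And>m. x \<in> I m) \<Longrightarrow> x = 0"
  using val_ideal_iff[of x "v x + 1"] by auto

end

locale local_field = valued_field v for v :: "'a::field \<Rightarrow> int" +
  fixes uf :: 'a
  assumes complete: "val_complete v"
    and finite_residue_field: "finite (residue_field v)"
    and uf_nonzero [simp]: "uf \<noteq> 0"
    and val_uf: "v uf = 1"
begin

lemma uf_power_nonzero [simp]: "uf ^ k \<noteq> 0"
  by simp

lemma val_uf_power [simp]: "v (uf ^ k) = int k"
  using val_power[OF uf_nonzero] val_uf by simp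

lemma uf_power_in_val_ideal: "uf ^ k \<in> I (int k)"
  using in_val_ideal_val[of "uf ^ k"] by simp

lemma uf_power_mult_in_val_ideal: "c \<in> I 0 \<Longrightarrow> uf ^ k * c \<in> I (int k)"
  using val_ideal_mult[OF uf_power_in_val_ideal, of c 0 k] by simp

lemma uf_power_mult_in_val_ring:
  assumes "c \<in> I 0"
  shows "uf ^ k * c \<in> I 0"
proof -
  have "uf ^ k * c \<in> I (int k)"
    using assms by (rule uf_power_mult_in_val_ideal)
  then show ?thesis
    by (rule val_ideal_mono) simp
qed

lemma val_ring_eq: "val_ring v = I 0"
  by (simp add: val_ring_def)

lemma val_ideal_mult_uf_power_iff: "x * uf ^ k \<in> I m \<longleftrightarrow> x \<in> I (m - int k)"
  using val_ideal_mult_right_iff[OF uf_power_nonzero] by simp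

lemma convergent_of_increments:
  assumes incr: "\<And>j. s (Suc j) - s j \<in> I (int j)"
  obtains L where "\<And>m. \<exists>N. \<forall>i\<ge>N. s i - L \<in> I m"
proof -
  have tail: "s (N + k) - s N \<in> I (int N)" for N k
  proof (induction k)
    case (Suc k)
    have "s (Suc (N + k)) - s (N + k) \<in> I (int N)"
      by (rule val_ideal_mono[OF incr]) simp
    from val_ideal_add[OF this Suc] show ?case by simp
  qed simp
  have "\<exists>N. \<forall>i\<ge>N. \<forall>j\<ge>N. s i - s j \<in> I m" for m
  proof (intro exI[of _ "nat m"] allI impI)
    fix i j assume "nat m \<le> i" "nat m \<le> j"
    then obtain a b where "i = nat m + a" "j = nat m + b" by (metis le_add_diff_inverse)
    then have "s i - s j = (s (nat m + a) - s (nat m)) - (s (nat m + b) - s (nat m))" by simp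
    also have "\<dots> \<in> I (int (nat m))" by (intro val_ideal_diff tail)
    finally show "s i - s j \<in> I m" by (rule val_ideal_mono) simp
  qed
  then show ?thesis
    using complete that unfolding val_complete_def by blast
qed

text \<open>The root is the limit of the iteration \<open>s \<mapsto> w - s\<^sup>2\<close>, which contracts on \<open>\<varpi>\<O>\<close>.\<close>

lemma exists_root_square_plus_self:
  assumes w: "w \<in> I 1"
  obtains s where "s \<in> I 1" "s ^ 2 + s = w"
proof -
  define s where "s = rec_nat 0 (\<lambda>_ t. w - t ^ 2)"
  have s0: "s 0 = 0" and sSuc: "\<And>j. s (Suc j) = w - s j ^ 2"
    by (simp_all add: s_def)
  have s_in: "s j \<in> I 1" for j
  proof (induction j)
    case (Suc j)
    have "s j ^ 2 \<in> I 2"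
      using val_ideal_mult[OF Suc Suc] by (simp add: power2_eq_square)
    then have "s j ^ 2 \<in> I 1" by (rule val_ideal_mono) simp
    then show ?case using w by (simp add: sSuc val_ideal_diff)
  qed (simp add: s0)
  have incr: "s (Suc j) - s j \<in> I (int j + 1)" for j
  proof (induction j)
    case (Suc j)
    have eq: "s (Suc (Suc j)) - s (Suc j) = - ((s (Suc j) - s j) * (s (Suc j) + s j))"
      by (simp add: sSuc algebra_simps power2_eq_square)
    have "s (Suc j) + s j \<in> I 1"
      using s_in by (intro val_ideal_add)
    from val_ideal_mult[OF Suc this] show ?case
      unfolding eq by (simp add: add_ac)
  qed (use w in \<open>simp add: sSuc s0\<close>)
  have "s (Suc j) - s j \<in> I (int j)" for j
    using incr by (rule val_ideal_mono) simp
  then obtain L where L: "\<And>m. \<exists>N. \<forall>i\<ge>N. s i - L \<in> I m"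
    using convergent_of_increments by blast
  obtain N1 where "\<forall>i\<ge>N1. s i - L \<in> I 1"
    using L by blast
  then have L_in: "L \<in> I 1"
    using val_ideal_diff[OF s_in[of N1], of "s N1 - L"] by simp
  have "L ^ 2 + L - w = 0"
  proof (rule in_all_val_ideals_imp_zero)
    fix m
    obtain N where N: "\<forall>i\<ge>N. s i - L \<in> I m"
      using L by blast
    have "L + s N \<in> I 0"
      using L_in s_in by (intro val_ideal_mono[OF val_ideal_add]) auto
    then have "- (L + s N) \<in> I 0"
      by (simp only: val_ideal_uminus_iff)
    then have "(s N - L) * (- (L + s N)) \<in> I (m + 0)"
      using N by (intro val_ideal_mult) auto
    moreover have "s (Suc N) - L \<in> I m"
      using N by simp
    moreover have "L ^ 2 + L - w = (s N - L) * (- (L + s N)) - (s (Suc N) - L)"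
      by (simp add: sSuc algebra_simps power2_eq_square)
    ultimately show "L ^ 2 + L - w \<in> I m"
      by (metis add_0_right val_ideal_diff)
  qed
  then show ?thesis
    using that L_in by simp
qed

text \<open>Hensel's lemma for \<open>X\<^sup>2 = 1 + y\<close>: put \<open>X = 1 + 2s\<close>, so that \<open>s\<^sup>2 + s = y/4\<close>.\<close>

lemma exists_sqrt_one_plus:
  assumes two: "(2::'a) \<noteq> 0" and val_two: "0 \<le> v 2" and y: "y \<in> I (2 * v 2 + 1)"
  obtains t where "t \<noteq> 0" "t ^ 2 = 1 + y"
proof -
  have four: "(4::'a) \<noteq> 0"
    using two mult_eq_0_iff[of "2::'a" 2] by simp
  have "v 4 = 2 * v 2"
    using val_mult[OF two two] by simp
  then have "y / 4 \<in> I 1"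
    using y four val_ideal_mult_right_iff[OF four, of "y / 4"] by simp
  then obtain s where s: "s ^ 2 + s = y / 4"
    using exists_root_square_plus_self by blast
  have t2: "(1 + 2 * s) ^ 2 = 1 + y"
  proof -
    have "(1 + 2 * s) ^ 2 = 1 + 4 * (s ^ 2 + s)"
      by (simp add: algebra_simps power2_eq_square)
    also have "\<dots> = 1 + y"
      using s four by (simp add: field_simps)
    finally show ?thesis .
  qed
  have "1 + y \<noteq> 0"
  proof
    assume "1 + y = 0"
    then have "y = -1"
      by (simp add: eq_neg_iff_add_eq_0 add.commute)
    with y val_two show False
      by (simp add: val_ideal_iff)
  qed
  with t2 have "1 + 2 * s \<noteq> 0"
    by auto
  then show ?thesis
    using t2 by (rule that)
qed

lemma equiv_residue_rel: "equiv (val_ring v) (residue_rel v)"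
proof (rule equivI)
  show "residue_rel v \<subseteq> val_ring v \<times> val_ring v"
    by (auto simp: residue_rel_def)
  show "refl_on (val_ring v) (residue_rel v)"
    by (rule refl_onI) (auto simp: residue_rel_def)
  show "sym (residue_rel v)"
    by (auto simp: sym_def residue_rel_def intro: iffD1[OF val_ideal_diff_commute])
  show "trans (residue_rel v)"
    by (rule transI) (auto simp: residue_rel_def dest: val_ideal_add)
qed

definition residue_reps :: "'a set" where
  "residue_reps = (\<lambda>C. SOME y. y \<in> C) ` residue_field v"

lemma residue_class_rep: "C \<in> residue_field v \<Longrightarrow> (SOME y. y \<in> C) \<in> C"
  using equiv_residue_rel unfolding residue_field_def
  by (metis in_quotient_imp_non_empty ex_in_conv someI_ex)

lemma residue_class_disjoint: "C \<in> residue_field v \<Longrightarrow> D \<in> residue_field v \<Longrightarrow> x \<in> C \<Longrightarrow> x \<in> D \<Longrightarrow> C = D"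
  using equiv_residue_rel unfolding residue_field_def by (metis quotient_disj disjoint_iff)

lemma finite_residue_reps: "finite residue_reps"
  unfolding residue_reps_def using finite_residue_field by simp

lemma residue_reps_subset: "residue_reps \<subseteq> I 0"
  using residue_class_rep equiv_residue_rel
  by (auto simp: residue_reps_def residue_field_def val_ring_eq dest!: in_quotient_imp_subset)

lemma residue_reps_cover:
  assumes "x \<in> I 0"
  obtains r where "r \<in> residue_reps" "x - r \<in> I 1"
proof -
  let ?C = "residue_rel v `` {x}"
  have C: "?C \<in> residue_field v"
    using assms by (auto simp: residue_field_def val_ring_eq intro: quotientI)
  then have "(x, SOME y. y \<in> ?C) \<in> residue_rel v"
    using residue_class_rep by blast
  then show ?thesis
    using C that unfolding residue_reps_def residue_rel_def by blast
qed

lemma residue_reps_unique: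
  assumes r: "r \<in> residue_reps" and r': "r' \<in> residue_reps" and "r - r' \<in> I 1"
  shows "r = r'"
proof -
  obtain C where C: "C \<in> residue_field v" "r = (SOME y. y \<in> C)"
    using r unfolding residue_reps_def by blast
  obtain D where D: "D \<in> residue_field v" "r' = (SOME y. y \<in> D)"
    using r' unfolding residue_reps_def by blast
  have "(r, r') \<in> residue_rel v"
    using assms residue_reps_subset by (auto simp: residue_rel_def val_ring_eq)
  then have "r' \<in> C"
    using equiv_residue_rel C residue_class_rep[OF C(1)] unfolding residue_field_def
    by (metis quotient_eq_iff equiv_class_eq_iff in_quotient_imp_closed)
  then show ?thesis
    using C D residue_class_rep[OF D(1)] residue_class_disjoint by metis
qed

lemma card_residue_reps: "card residue_reps = card (residue_field v)"
proof -
  have "inj_on (\<lambda>C. SOME y. y \<in> C) (residue_field v)"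
    by (rule inj_onI) (metis residue_class_rep residue_class_disjoint)
  then show ?thesis
    unfolding residue_reps_def by (rule card_image)
qed

text \<open>The representatives of \<open>0\<close> and \<open>1\<close> differ.\<close>

lemma card_residue_field_ge_2: "2 \<le> card (residue_field v)"
proof -
  obtain r0 where r0: "r0 \<in> residue_reps" "0 - r0 \<in> I 1"
    using residue_reps_cover[of 0] by auto
  obtain r1 where r1: "r1 \<in> residue_reps" "1 - r1 \<in> I 1"
    using residue_reps_cover[of 1] by (auto simp: val_ideal_iff)
  have "r0 \<noteq> r1"
  proof
    assume "r0 = r1"
    then have "(1 - r1) - (0 - r0) \<in> I 1"
      using r0 r1 val_ideal_diff by blast
    then show False
      using \<open>r0 = r1\<close> by (simp add: val_ideal_iff)
  qed
  then have "card {r0, r1} \<le> card residue_reps"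
    using r0 r1 finite_residue_reps by (intro card_mono) auto
  then show ?thesis
    using \<open>r0 \<noteq> r1\<close> card_residue_reps by simp
qed

lemma finite_reps_mod_uf_power:
  obtains R where "finite R" "R \<subseteq> I 0" "\<And>x. x \<in> I 0 \<Longrightarrow> \<exists>r\<in>R. x - r \<in> I (int N)"
proof (induction N arbitrary: thesis)
  case 0
  show ?case
    by (rule "0"[of "{0}"]) (auto simp: val_ideal_iff)
next
  case (Suc N)
  obtain R where R: "finite R" "R \<subseteq> I 0" "\<And>x. x \<in> I 0 \<Longrightarrow> \<exists>r\<in>R. x - r \<in> I (int N)"
    using Suc.IH by blast
  define R' where "R' = (\<lambda>(r, c). r + uf ^ N * c) ` (R \<times> residue_reps)"
  show ?case
  proof (rule Suc.prems)
    show "finite R'"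
      unfolding R'_def using R(1) finite_residue_reps by simp
    have "uf ^ N * c \<in> I 0" if "c \<in> residue_reps" for c
      using that residue_reps_subset by (auto intro: uf_power_mult_in_val_ring)
    then show "R' \<subseteq> I 0"
      using R(2) by (auto simp: R'_def intro: val_ideal_add)
    fix x assume x: "x \<in> I 0"
    obtain r where r: "r \<in> R" "x - r \<in> I (int N)"
      using R(3) x by blast
    define y where "y = (x - r) / uf ^ N"
    have xr: "x - r = y * uf ^ N"
      by (simp add: y_def)
    have "y \<in> I 0"
      using r(2) unfolding xr val_ideal_mult_uf_power_iff by simp
    then obtain c where c: "c \<in> residue_reps" "y - c \<in> I 1"
      by (rule residue_reps_cover)
    have "x - (r + uf ^ N * c) = (y - c) * uf ^ N"
      using xr by (simp add: algebra_simps)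
    then have "x - (r + uf ^ N * c) \<in> I (int (Suc N))"
      using c(2) by (simp add: val_ideal_mult_uf_power_iff)
    moreover have "r + uf ^ N * c \<in> R'"
      using r c unfolding R'_def by force
    ultimately show "\<exists>r\<in>R'. x - r \<in> I (int (Suc N))"
      by blast
  qed
qed

end

locale haar_space = local_field v uf for v :: "'a::field \<Rightarrow> int" and uf +
  fixes n :: nat and M :: "(nat \<Rightarrow> 'a) measure"
  assumes haar: "haar_prob v n M"
begin

abbreviation V where "V \<equiv> int_vectors v n"
abbreviation ball where "ball \<equiv> vec_ball v n"

lemma space_eq: "space M = V"
  using haar by (simp add: haar_prob_def)

lemma emeasure_int_vectors: "emeasure M V = 1"
  using haar space_eq by (simp add: haar_prob_def)

lemma emeasure_finite: "emeasure M A \<noteq> \<infinity>"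
  using emeasure_space[of M A] emeasure_int_vectors space_eq by (auto simp: top_unique)

lemma measure_le_1: "measure M A \<le> 1"
  using emeasure_space[of M A] emeasure_int_vectors space_eq
  unfolding measure_def by (intro enn2real_leI) auto

lemma mem_int_vectors_iff: "x \<in> V \<longleftrightarrow> (\<forall>i<n. x i \<in> I 0) \<and> (\<forall>i. n \<le> i \<longrightarrow> x i = undefined)"
  by (auto simp: int_vectors_def PiE_iff val_ring_eq extensional_def)

lemma mem_ball_iff: "x \<in> ball a m \<longleftrightarrow> x \<in> V \<and> (\<forall>i<n. x i - a i \<in> I (int m))"
  by (simp add: vec_ball_def)

lemma ball_in_sets: "a \<in> V \<Longrightarrow> ball a m \<in> sets M"
  using haar unfolding haar_prob_def by (auto intro: sigma_sets.Basic)

lemma center_in_ball: "a \<in> V \<Longrightarrow> a \<in> ball a m"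
  by (simp add: mem_ball_iff)

lemma ball_eq_of_mem:
  assumes "b \<in> ball a m"
  shows "ball b m = ball a m"
proof -
  have "x i - b i \<in> I (int m) \<longleftrightarrow> x i - a i \<in> I (int m)" if "i < n" for x i
  proof -
    have ba: "b i - a i \<in> I (int m)"
      using assms that by (simp add: mem_ball_iff)
    show ?thesis
    proof
      assume "x i - b i \<in> I (int m)"
      from val_ideal_add[OF this ba] show "x i - a i \<in> I (int m)"
        by simp
    next
      assume "x i - a i \<in> I (int m)"
      from val_ideal_diff[OF this ba] show "x i - b i \<in> I (int m)"
        by simp
    qed
  qed
  then show ?thesis
    by (auto simp: mem_ball_iff)
qed

lemma balls_disjoint: "ball a m \<noteq> ball b m \<Longrightarrow> ball a m \<inter> ball b m = {}"
  using ball_eq_of_mem by blast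

lemma ball_zero: "a \<in> V \<Longrightarrow> ball a 0 = V"
  by (auto simp: mem_ball_iff mem_int_vectors_iff intro!: val_ideal_diff)

definition balls_of :: "nat \<Rightarrow> (nat \<Rightarrow> 'a) set \<Rightarrow> (nat \<Rightarrow> 'a) set set" where
  "balls_of m A = {ball a m | a. a \<in> A}"

lemma finite_balls_of: "finite (balls_of m V)"
proof -
  obtain R where R: "finite R" "R \<subseteq> I 0" "\<And>x. x \<in> I 0 \<Longrightarrow> \<exists>r\<in>R. x - r \<in> I (int m)"
    using finite_reps_mod_uf_power[where N = m] by blast
  have "balls_of m V \<subseteq> (\<lambda>r. ball r m) ` (PiE {..<n} (\<lambda>_. R))"
  proof
    fix C assume "C \<in> balls_of m V"
    then obtain a where a: "a \<in> V" "C = ball a m"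
      by (auto simp: balls_of_def)
    define r where "r = (\<lambda>i\<in>{..<n}. SOME r. r \<in> R \<and> a i - r \<in> I (int m))"
    have r_i: "r i \<in> R \<and> a i - r i \<in> I (int m)" if "i < n" for i
    proof -
      have "a i \<in> I 0"
        using a that by (simp add: mem_int_vectors_iff)
      then have "\<exists>r. r \<in> R \<and> a i - r \<in> I (int m)"
        using R(3) by blast
      from someI_ex[OF this] show ?thesis
        unfolding r_def using that by simp
    qed
    then have "r \<in> V" "r \<in> PiE {..<n} (\<lambda>_. R)"
      using R(2) by (auto simp: mem_int_vectors_iff r_def)
    then have "a \<in> ball r m"
      using a r_i by (auto simp: mem_ball_iff)
    then show "C \<in> (\<lambda>r. ball r m) ` (PiE {..<n} (\<lambda>_. R))"
      using a ball_eq_of_mem \<open>r \<in> PiE {..<n} (\<lambda>_. R)\<close> by auto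
  qed
  moreover have "finite ((\<lambda>r. ball r m) ` (PiE {..<n} (\<lambda>_. R)))"
    using R(1) by (intro finite_imageI finite_PiE) auto
  ultimately show ?thesis
    by (rule finite_subset)
qed

lemma measure_eq_sum_Int_balls:
  assumes "A \<in> sets M"
  shows "measure M A = (\<Sum>C\<in>balls_of m V. measure M (A \<inter> C))"
proof -
  have "A \<subseteq> V"
    using sets.sets_into_space[OF assms] space_eq by simp
  then have "A = (\<Union>C\<in>balls_of m V. A \<inter> C)"
    by (auto simp: balls_of_def intro: center_in_ball)
  moreover have "measure M (\<Union>C\<in>balls_of m V. A \<inter> C) = (\<Sum>C\<in>balls_of m V. measure M (A \<inter> C))"
  proof (rule measure_finite_Union[OF finite_balls_of])
    show "(\<lambda>C. A \<inter> C) ` balls_of m V \<subseteq> sets M"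
      using assms by (auto simp: balls_of_def intro!: sets.Int ball_in_sets)
    show "disjoint_family_on (\<lambda>C. A \<inter> C) (balls_of m V)"
      unfolding disjoint_family_on_def balls_of_def using balls_disjoint by auto
  qed (rule emeasure_finite)
  ultimately show ?thesis
    by simp
qed

definition ball_saturated :: "nat \<Rightarrow> (nat \<Rightarrow> 'a) set \<Rightarrow> bool" where
  "ball_saturated m A \<longleftrightarrow> A \<subseteq> V \<and> (\<forall>x\<in>A. ball x m \<subseteq> A)"

lemma ball_saturated_eq_Union: "ball_saturated m A \<Longrightarrow> A = \<Union>(balls_of m A)"
  unfolding ball_saturated_def balls_of_def using center_in_ball by blast

lemma finite_balls_of_subset: "A \<subseteq> V \<Longrightarrow> finite (balls_of m A)"
  unfolding balls_of_def by (rule finite_subset[OF _ finite_balls_of]) (auto simp: balls_of_def)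

lemma ball_saturated_in_sets:
  assumes "ball_saturated m A"
  shows "A \<in> sets M"
proof -
  have "\<Union>(balls_of m A) \<in> sets M"
    using assms by (intro sets.finite_Union finite_balls_of_subset)
      (auto simp: ball_saturated_def balls_of_def intro!: ball_in_sets)
  then show ?thesis
    using ball_saturated_eq_Union[OF assms] by simp
qed

definition translate :: "(nat \<Rightarrow> 'a) \<Rightarrow> (nat \<Rightarrow> 'a) \<Rightarrow> (nat \<Rightarrow> 'a)" where
  "translate b x = (\<lambda>i\<in>{..<n}. x i + b i)"

lemma translate_in_int_vectors: "b \<in> V \<Longrightarrow> x \<in> V \<Longrightarrow> translate b x \<in> V"
  by (auto simp: translate_def mem_int_vectors_iff intro: val_ideal_add)

lemma measure_translate: "A \<in> sets M \<Longrightarrow> b \<in> V \<Longrightarrow> measure M (translate b ` A) = measure M A"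
  using haar unfolding haar_prob_def measure_def translate_def by simp

lemma translate_ball:
  assumes b: "b \<in> V" and c: "c \<in> V"
  shows "translate b ` ball c m = ball (translate b c) m"
proof
  show "translate b ` ball c m \<subseteq> ball (translate b c) m"
    using translate_in_int_vectors[OF b] by (auto simp: mem_ball_iff translate_def)
  show "ball (translate b c) m \<subseteq> translate b ` ball c m"
  proof
    fix y assume y: "y \<in> ball (translate b c) m"
    define x where "x = (\<lambda>i\<in>{..<n}. y i - b i)"
    have "y \<in> V"
      using y by (simp add: mem_ball_iff)
    then have "x \<in> ball c m" "y = translate b x"
      using y b by (auto simp: mem_ball_iff x_def translate_def mem_int_vectors_iff algebra_simps
          intro: val_ideal_diff)
    then show "y \<in> translate b ` ball c m"
      by blast
  qed
qed

lemma measure_ball_eq: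
  assumes a: "a \<in> V" and c: "c \<in> V"
  shows "measure M (ball a m) = measure M (ball c m)"
proof -
  define b where "b = (\<lambda>i\<in>{..<n}. a i - c i)"
  have b: "b \<in> V"
    using a c by (auto simp: b_def mem_int_vectors_iff intro: val_ideal_diff)
  have "translate b c = a"
    using a c by (auto simp: translate_def b_def mem_int_vectors_iff)
  then show ?thesis
    using translate_ball[OF b c] measure_translate[OF ball_in_sets[OF c] b] by simp
qed

definition subball_center :: "(nat \<Rightarrow> 'a) \<Rightarrow> (nat \<Rightarrow> 'a) \<Rightarrow> nat \<Rightarrow> (nat \<Rightarrow> 'a)" where
  "subball_center a d m = (\<lambda>i\<in>{..<n}. a i + uf ^ m * d i)"

lemma subball_center_in_int_vectors:
  assumes "a \<in> V" "d \<in> PiE {..<n} (\<lambda>_. residue_reps)"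
  shows "subball_center a d m \<in> V"
proof -
  have "uf ^ m * d i \<in> I 0" if "i < n" for i
    using assms(2) that residue_reps_subset by (auto intro: uf_power_mult_in_val_ring)
  then show ?thesis
    using assms(1) by (auto simp: subball_center_def mem_int_vectors_iff intro: val_ideal_add)
qed

lemma mem_subball:
  assumes x: "x \<in> ball a m"
  obtains d where "d \<in> PiE {..<n} (\<lambda>_. residue_reps)" "x \<in> ball (subball_center a d m) (Suc m)"
proof -
  define y where "y i = (x i - a i) / uf ^ m" for i
  define d where "d = (\<lambda>i\<in>{..<n}. SOME c. c \<in> residue_reps \<and> y i - c \<in> I 1)"
  have xy: "x i - a i = y i * uf ^ m" for i
    by (simp add: y_def)
  have "y i \<in> I 0" if "i < n" for i
    using x that unfolding mem_ball_iff by (simp add: xy val_ideal_mult_uf_power_iff)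
  then have ex: "\<exists>c. c \<in> residue_reps \<and> y i - c \<in> I 1" if "i < n" for i
    using that residue_reps_cover by blast
  have d: "d i \<in> residue_reps \<and> y i - d i \<in> I 1" if "i < n" for i
    using someI_ex[OF ex[OF that]] that by (simp add: d_def)
  have "x i - subball_center a d m i = (y i - d i) * uf ^ m" if "i < n" for i
    using that by (simp add: subball_center_def algebra_simps xy[symmetric])
  then have "x \<in> ball (subball_center a d m) (Suc m)"
    using x d by (simp add: mem_ball_iff val_ideal_mult_uf_power_iff)
  moreover have "d \<in> PiE {..<n} (\<lambda>_. residue_reps)"
    using d by (auto simp: d_def)
  ultimately show ?thesis
    using that by blast
qed

lemma subball_subset_ball:
  assumes d: "d \<in> PiE {..<n} (\<lambda>_. residue_reps)"
  shows "ball (subball_center a d m) (Suc m) \<subseteq> ball a m"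
proof
  fix x assume x: "x \<in> ball (subball_center a d m) (Suc m)"
  have "x i - a i \<in> I (int m)" if "i < n" for i
  proof -
    have "x i - subball_center a d m i \<in> I (int (Suc m))"
      using x that by (simp add: mem_ball_iff)
    then have "x i - subball_center a d m i \<in> I (int m)"
      by (rule val_ideal_mono) simp
    moreover have "uf ^ m * d i \<in> I (int m)"
      using d that residue_reps_subset by (auto intro: uf_power_mult_in_val_ideal)
    ultimately have "(x i - subball_center a d m i) + uf ^ m * d i \<in> I (int m)"
      by (rule val_ideal_add)
    then show ?thesis
      using that by (simp add: subball_center_def)
  qed
  then show "x \<in> ball a m"
    using x by (simp add: mem_ball_iff)
qed

lemma ball_eq_Union_subballs:
  "ball a m = (\<Union>d\<in>PiE {..<n} (\<lambda>_. residue_reps). ball (subball_center a d m) (Suc m))"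
  using subball_subset_ball by (blast elim: mem_subball)

lemma disjoint_subballs:
  "disjoint_family_on (\<lambda>d. ball (subball_center a d m) (Suc m)) (PiE {..<n} (\<lambda>_. residue_reps))"
  unfolding disjoint_family_on_def
proof (intro ballI impI)
  fix d d' assume d: "d \<in> PiE {..<n} (\<lambda>_. residue_reps)" and d': "d' \<in> PiE {..<n} (\<lambda>_. residue_reps)"
    and "d \<noteq> d'"
  then obtain i where i: "i < n" "d i \<noteq> d' i"
    by (metis PiE_ext lessThan_iff)
  show "ball (subball_center a d m) (Suc m) \<inter> ball (subball_center a d' m) (Suc m) = {}"
  proof (rule ccontr)
    assume "ball (subball_center a d m) (Suc m) \<inter> ball (subball_center a d' m) (Suc m) \<noteq> {}"
    then obtain x where "x \<in> ball (subball_center a d m) (Suc m)" "x \<in> ball (subball_center a d' m) (Suc m)"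
      by blast
    then have "x i - subball_center a d' m i \<in> I (int (Suc m))"
      "x i - subball_center a d m i \<in> I (int (Suc m))"
      using i by (simp_all add: mem_ball_iff)
    then have "(x i - subball_center a d' m i) - (x i - subball_center a d m i) \<in> I (int (Suc m))"
      by (rule val_ideal_diff)
    moreover have "(x i - subball_center a d' m i) - (x i - subball_center a d m i) = (d i - d' i) * uf ^ m"
      using i by (simp add: subball_center_def algebra_simps)
    ultimately have "d i - d' i \<in> I 1"
      by (simp add: val_ideal_mult_uf_power_iff)
    then show False
      using residue_reps_unique d d' i by auto
  qed
qed

lemma measure_ball: "a \<in> V \<Longrightarrow> measure M (ball a m) = 1 / real (card (residue_field v)) ^ (n * m)"
proof (induction m arbitrary: a)
  case 0
  then show ?case
    using emeasure_int_vectors by (simp add: ball_zero measure_def)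
next
  case (Suc m)
  let ?P = "PiE {..<n} (\<lambda>_. residue_reps)"
  let ?q = "real (card (residue_field v))"
  have "measure M (ball a m) = (\<Sum>d\<in>?P. measure M (ball (subball_center a d m) (Suc m)))"
    unfolding ball_eq_Union_subballs[of a m]
    using disjoint_subballs finite_residue_reps Suc.prems
    by (intro measure_finite_Union emeasure_finite)
      (auto intro!: ball_in_sets subball_center_in_int_vectors finite_PiE)
  also have "\<dots> = (\<Sum>d\<in>?P. measure M (ball a (Suc m)))"
    using Suc.prems by (intro sum.cong refl measure_ball_eq subball_center_in_int_vectors)
  also have "\<dots> = ?q ^ n * measure M (ball a (Suc m))"
    using finite_residue_reps card_residue_reps by (simp add: card_PiE)
  finally have "?q ^ n * measure M (ball a (Suc m)) = 1 / ?q ^ (n * m)"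
    using Suc by simp
  moreover have "?q > 0"
    using card_residue_field_ge_2 by simp
  ultimately show ?case
    by (simp add: field_simps power_add power_mult_distrib mult.commute power_mult)
qed

lemma measure_ball_saturated:
  assumes "ball_saturated m A"
  shows "measure M A = card (balls_of m A) / real (card (residue_field v)) ^ (n * m)"
proof -
  have "measure M A = measure M (\<Union>C\<in>balls_of m A. C)"
    using ball_saturated_eq_Union[OF assms] by simp
  also have "\<dots> = (\<Sum>C\<in>balls_of m A. measure M C)"
  proof (rule measure_finite_Union)
    show "finite (balls_of m A)"
      using assms by (intro finite_balls_of_subset) (simp add: ball_saturated_def)
    show "(\<lambda>C. C) ` balls_of m A \<subseteq> sets M"
      using assms by (auto simp: ball_saturated_def balls_of_def intro!: ball_in_sets)
    show "disjoint_family_on (\<lambda>C. C) (balls_of m A)"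
      unfolding disjoint_family_on_def balls_of_def using balls_disjoint by auto
  qed (rule emeasure_finite)
  also have "\<dots> = (\<Sum>C\<in>balls_of m A. 1 / real (card (residue_field v)) ^ (n * m))"
    using assms measure_ball by (intro sum.cong) (auto simp: ball_saturated_def balls_of_def)
  finally show ?thesis
    by simp
qed

definition uf_scale :: "(nat \<Rightarrow> 'a) \<Rightarrow> (nat \<Rightarrow> 'a)" where
  "uf_scale x = (\<lambda>i\<in>{..<n}. uf * x i)"

lemma uf_scale_in_int_vectors: "x \<in> V \<Longrightarrow> uf_scale x \<in> V"
  using uf_power_mult_in_val_ring[of _ 1] by (auto simp: uf_scale_def mem_int_vectors_iff)

lemma inj_on_uf_scale: "inj_on uf_scale V"
proof (rule inj_onI)
  fix x y assume "x \<in> V" "y \<in> V" "uf_scale x = uf_scale y"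
  then have "x i = y i" for i
    by (cases "i < n") (auto simp: uf_scale_def mem_int_vectors_iff dest: fun_cong[of _ _ i])
  then show "x = y" ..
qed

lemma uf_scale_ball:
  assumes a: "a \<in> V"
  shows "uf_scale ` ball a m = ball (uf_scale a) (Suc m)"
proof
  show "uf_scale ` ball a m \<subseteq> ball (uf_scale a) (Suc m)"
  proof
    fix y assume "y \<in> uf_scale ` ball a m"
    then obtain x where x: "x \<in> ball a m" "y = uf_scale x"
      by blast
    have "(x i - a i) * uf ^ 1 \<in> I (int (Suc m))" if "i < n" for i
      using x that by (simp only: val_ideal_mult_uf_power_iff) (simp add: mem_ball_iff)
    moreover have "y i - uf_scale a i = (x i - a i) * uf ^ 1" if "i < n" for i
      using x that by (simp add: uf_scale_def algebra_simps)
    ultimately show "y \<in> ball (uf_scale a) (Suc m)"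
      using x uf_scale_in_int_vectors by (simp add: mem_ball_iff)
  qed
  show "ball (uf_scale a) (Suc m) \<subseteq> uf_scale ` ball a m"
  proof
    fix y assume y: "y \<in> ball (uf_scale a) (Suc m)"
    define x where "x = (\<lambda>i\<in>{..<n}. y i / uf)"
    have "(x i - a i) * uf ^ 1 = y i - uf_scale a i" if "i < n" for i
      using that by (simp add: x_def uf_scale_def algebra_simps)
    then have close: "x i - a i \<in> I (int m)" if "i < n" for i
      using y that val_ideal_mult_uf_power_iff[of "x i - a i" 1 "int (Suc m)"]
      by (simp add: mem_ball_iff)
    have "x i \<in> I 0" if "i < n" for i
    proof -
      have "(x i - a i) + a i \<in> I 0"
        using a close[OF that] that val_ideal_mono
        by (intro val_ideal_add) (auto simp: mem_int_vectors_iff)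
      then show ?thesis
        by simp
    qed
    then have "x \<in> ball a m"
      using close by (auto simp: mem_ball_iff mem_int_vectors_iff x_def)
    moreover have "y = uf_scale x"
      using y by (auto simp: uf_scale_def x_def mem_ball_iff mem_int_vectors_iff)
    ultimately show "y \<in> uf_scale ` ball a m"
      by blast
  qed
qed

lemma ball_saturated_uf_scale:
  assumes A: "ball_saturated m A"
  shows "ball_saturated (Suc m) (uf_scale ` A)"
  unfolding ball_saturated_def
proof (intro conjI ballI)
  show "uf_scale ` A \<subseteq> V"
    using A uf_scale_in_int_vectors by (auto simp: ball_saturated_def)
  fix y assume "y \<in> uf_scale ` A"
  then obtain x where x: "x \<in> A" "y = uf_scale x"
    by blast
  then have "ball y (Suc m) = uf_scale ` ball x m"
    using A uf_scale_ball by (auto simp: ball_saturated_def)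
  also have "\<dots> \<subseteq> uf_scale ` A"
    using A x by (auto simp: ball_saturated_def)
  finally show "ball y (Suc m) \<subseteq> uf_scale ` A" .
qed

lemma balls_of_uf_scale:
  assumes A: "ball_saturated m A"
  shows "balls_of (Suc m) (uf_scale ` A) = (\<lambda>C. uf_scale ` C) ` balls_of m A"
proof -
  have "ball (uf_scale x) (Suc m) = uf_scale ` ball x m" if "x \<in> A" for x
    using A that uf_scale_ball by (auto simp: ball_saturated_def)
  then show ?thesis
    unfolding balls_of_def by blast
qed

text \<open>Scaling by \<open>\<varpi>\<close> maps the radius-\<open>m\<close> balls of \<open>A\<close> bijectively onto the radius-\<open>m + 1\<close>
  balls of its image, each of which is \<open>q\<^sup>n\<close> times smaller.\<close>

lemma measure_uf_scale:
  assumes A: "ball_saturated m A"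
  shows "measure M (uf_scale ` A) = measure M A / real (card (residue_field v)) ^ n"
proof -
  have "\<Union>(balls_of m A) \<subseteq> V"
    by (auto simp: balls_of_def mem_ball_iff)
  then have "inj_on (\<lambda>C. uf_scale ` C) (balls_of m A)"
    by (intro inj_on_image inj_on_subset[OF inj_on_uf_scale])
  then have "card (balls_of (Suc m) (uf_scale ` A)) = card (balls_of m A)"
    using balls_of_uf_scale[OF A] by (simp add: card_image)
  then show ?thesis
    using measure_ball_saturated[OF A] measure_ball_saturated[OF ball_saturated_uf_scale[OF A]]
    by (simp add: power_add algebra_simps)
qed

end

locale diagonal_form = haar_space v uf n M for v :: "'a::field \<Rightarrow> int" and uf n M +
  fixes a :: "nat \<Rightarrow> 'a"
  assumes coeffs: "\<forall>i<n. a i \<noteq> 0 \<and> 0 \<le> v (a i) \<and> v (a i) \<le> 1"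
    and two_nonzero: "(2::'a) \<noteq> 0"
    and val_two_pos: "1 \<le> v 2"
begin

abbreviation B where "B \<equiv> diag_form n a"

text \<open>\<open>congr_set \<sigma> \<ell>\<close> is the set \<open>{x \<in> \<O>\<^sup>n. B x - \<sigma> \<in> 2\<varpi>\<^sup>\<ell>\<O>}\<close> measured by \<open>X\<^sub>\<ell>\<^sup>B(\<sigma>)\<close>.\<close>

definition congr_set :: "'a \<Rightarrow> nat \<Rightarrow> (nat \<Rightarrow> 'a) set" where
  "congr_set \<sigma> l = {x \<in> V. B x - \<sigma> \<in> I (v 2 + int l)}"

lemma two_uf_power_nonzero: "2 * uf ^ l \<noteq> 0"
  using two_nonzero by simp

lemma val_two_uf_power: "v (2 * uf ^ l) = v 2 + int l"
  using val_mult[OF two_nonzero uf_power_nonzero] by simp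

lemma two_uf_power_mult_in_val_ideal: "r \<in> I m \<Longrightarrow> 2 * uf ^ l * r \<in> I (v 2 + int l + m)"
  by (intro val_ideal_mult in_val_ideal_val uf_power_in_val_ideal)

lemma image_two_uf_power_val_ring: "(\<lambda>t. 2 * uf ^ l * t) ` val_ring v = I (v 2 + int l)"
proof
  show "(\<lambda>t. 2 * uf ^ l * t) ` val_ring v \<subseteq> I (v 2 + int l)"
    using two_uf_power_mult_in_val_ideal[of _ 0] by (auto simp: val_ring_eq)
  show "I (v 2 + int l) \<subseteq> (\<lambda>t. 2 * uf ^ l * t) ` val_ring v"
  proof
    fix y assume y: "y \<in> I (v 2 + int l)"
    define t where "t = y / (2 * uf ^ l)"
    have yt: "y = t * (2 * uf ^ l)"
      using two_uf_power_nonzero by (simp add: t_def)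
    have "t \<in> I 0"
      using y unfolding yt val_ideal_mult_right_iff[OF two_uf_power_nonzero] val_two_uf_power by simp
    then show "y \<in> (\<lambda>t. 2 * uf ^ l * t) ` val_ring v"
      using yt by (auto simp: val_ring_eq mult.commute)
  qed
qed

lemma XB_eq_measure_congr_set: "XB v uf n a M \<sigma> l = measure M (congr_set \<sigma> l)"
  unfolding XB_def congr_set_def image_two_uf_power_val_ring by simp

lemma diag_form_update:
  assumes "i < n"
  shows "B (x(i := z)) = B x + a i * (z ^ 2 - x i ^ 2)"
proof -
  have "B (x(i := z)) = (\<Sum>j<n. a j * x j ^ 2 + (if j = i then a i * (z ^ 2 - x i ^ 2) else 0))"
    unfolding diag_form_def by (rule sum.cong) (auto simp: algebra_simps)
  also have "\<dots> = B x + a i * (z ^ 2 - x i ^ 2)"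
    using assms by (simp add: sum.distrib diag_form_def)
  finally show ?thesis .
qed

lemma diag_form_uf_scale: "B (uf_scale x) = uf ^ 2 * B x"
  unfolding diag_form_def uf_scale_def by (simp add: sum_distrib_left power_mult_distrib mult_ac)

lemma diag_form_diff_in_val_ideal:
  assumes x: "x \<in> V" and y: "y \<in> V" and close: "\<forall>i<n. x i - y i \<in> I N"
  shows "B x - B y \<in> I N"
proof -
  have "B x - B y = (\<Sum>i<n. a i * (x i + y i) * (x i - y i))"
    unfolding diag_form_def sum_subtractf[symmetric]
    by (rule sum.cong) (auto simp: algebra_simps power2_eq_square)
  also have "\<dots> \<in> I N"
  proof (rule val_ideal_sum)
    fix i assume "i \<in> {..<n}"
    then have "a i \<in> I 0" "x i + y i \<in> I 0" "x i - y i \<in> I N"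
      using coeffs x y close by (auto simp: val_ideal_iff[of "a i"] mem_int_vectors_iff intro!: val_ideal_add)
    then have "a i * (x i + y i) * (x i - y i) \<in> I (0 + 0 + N)"
      by (intro val_ideal_mult)
    then show "a i * (x i + y i) * (x i - y i) \<in> I N"
      by simp
  qed
  finally show ?thesis .
qed

lemma ball_saturated_congr_set:
  assumes "v 2 + int l \<le> int m"
  shows "ball_saturated m (congr_set \<sigma> l)"
  unfolding ball_saturated_def
proof (intro conjI ballI)
  show "congr_set \<sigma> l \<subseteq> V"
    by (auto simp: congr_set_def)
  fix x assume x: "x \<in> congr_set \<sigma> l"
  show "ball x m \<subseteq> congr_set \<sigma> l"
  proof
    fix y assume y: "y \<in> ball x m"
    have "B y - B x \<in> I (int m)"
      using x y by (intro diag_form_diff_in_val_ideal) (auto simp: mem_ball_iff congr_set_def)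
    then have "B y - B x \<in> I (v 2 + int l)"
      using assms by (rule val_ideal_mono)
    moreover have "B x - \<sigma> \<in> I (v 2 + int l)"
      using x by (simp add: congr_set_def)
    ultimately have "(B y - B x) + (B x - \<sigma>) \<in> I (v 2 + int l)"
      by (rule val_ideal_add)
    then show "y \<in> congr_set \<sigma> l"
      using y by (simp add: congr_set_def mem_ball_iff)
  qed
qed

lemma congr_set_in_sets: "congr_set \<sigma> l \<in> sets M"
  using val_two_pos by (intro ball_saturated_in_sets[OF ball_saturated_congr_set[of l "nat (v 2 + int l)"]]) simp

lemma measure_congr_set_bounded: "\<bar>XB v uf n a M \<sigma> l\<bar> \<le> 1"
  unfolding XB_eq_measure_congr_set using measure_le_1 by simp


lemma anisotropic_coord_in_max_ideal:
  assumes aniso: "\<forall>x::nat \<Rightarrow> 'a. (\<exists>i<n. x i \<noteq> 0) \<longrightarrow> diag_form n a x \<noteq> 0"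
    and y: "y \<in> V" and By: "B y \<in> I (2 * v 2 + 2)" and i: "i < n"
  shows "y i \<in> I 1"
proof (rule ccontr)
  assume "y i \<notin> I 1"
  then have yi: "y i \<noteq> 0" "v (y i) = 0"
    using y i by (auto simp: val_ideal_iff mem_int_vectors_iff)
  have ai: "a i \<noteq> 0" "v (a i) \<le> 1"
    using coeffs i by auto
  define c where "c = a i * y i ^ 2"
  have c: "c \<noteq> 0" "v c = v (a i)"
    using ai yi val_mult[OF ai(1), of "y i ^ 2"] val_power[OF yi(1), of 2] by (simp_all add: c_def)
  define w where "w = - B y / c"
  have wc: "w * c = - B y"
    using c by (simp add: w_def)
  have "w \<in> I (2 * v 2 + 2 - v c)"
    using By wc val_ideal_mult_right_iff[OF c(1), of w] by simp
  then have "w \<in> I (2 * v 2 + 1)"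
    by (rule val_ideal_mono) (use c ai in simp)
  moreover have "0 \<le> v 2"
    using val_two_pos by simp
  ultimately obtain t where t: "t \<noteq> 0" "t ^ 2 = 1 + w"
    using exists_sqrt_one_plus[OF two_nonzero] by blast
  have "B (y(i := t * y i)) = B y + a i * ((t * y i) ^ 2 - y i ^ 2)"
    by (rule diag_form_update[OF i])
  also have "\<dots> = B y + c * (t ^ 2 - 1)"
    by (simp add: c_def power_mult_distrib algebra_simps)
  also have "\<dots> = 0"
    using t(2) wc by (simp add: mult.commute)
  finally have "B (y(i := t * y i)) = 0" .
  moreover have "(y(i := t * y i)) i \<noteq> 0"
    using t(1) yi(1) by simp
  ultimately show False
    using aniso i by blast
qed

lemma congr_set_zero_shift:
  assumes aniso: "\<forall>x::nat \<Rightarrow> 'a. (\<exists>i<n. x i \<noteq> 0) \<longrightarrow> diag_form n a x \<noteq> 0"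
    and l: "v 2 \<le> int l"
  shows "congr_set 0 (l + 2) = uf_scale ` congr_set 0 l"
proof
  show "uf_scale ` congr_set 0 l \<subseteq> congr_set 0 (l + 2)"
  proof
    fix y assume "y \<in> uf_scale ` congr_set 0 l"
    then obtain x where x: "x \<in> congr_set 0 l" "y = uf_scale x"
      by blast
    then have "B x * uf ^ 2 \<in> I (v 2 + int (l + 2))"
      by (simp add: congr_set_def val_ideal_mult_uf_power_iff)
    then show "y \<in> congr_set 0 (l + 2)"
      using x uf_scale_in_int_vectors by (simp add: congr_set_def diag_form_uf_scale mult.commute)
  qed
  show "congr_set 0 (l + 2) \<subseteq> uf_scale ` congr_set 0 l"
  proof
    fix y assume y: "y \<in> congr_set 0 (l + 2)"
    have yV: "y \<in> V" and By: "B y \<in> I (v 2 + int (l + 2))"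
      using y by (simp_all add: congr_set_def)
    have "B y \<in> I (2 * v 2 + 2)"
      using By by (rule val_ideal_mono) (use l in simp)
    then have y1: "y i \<in> I 1" if "i < n" for i
      using anisotropic_coord_in_max_ideal[OF aniso yV _ that] by simp
    define x where "x = (\<lambda>i\<in>{..<n}. y i / uf)"
    have yx: "y i = x i * uf ^ 1" if "i < n" for i
      using that by (simp add: x_def)
    have "x i \<in> I 0" if "i < n" for i
      using y1[OF that] unfolding yx[OF that] val_ideal_mult_uf_power_iff by simp
    then have "x \<in> V"
      by (auto simp: mem_int_vectors_iff x_def)
    moreover have y_eq: "y = uf_scale x"
      using yV by (auto simp: uf_scale_def x_def mem_int_vectors_iff fun_eq_iff)
    moreover have "B x * uf ^ 2 \<in> I (v 2 + int (l + 2))"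
      using By unfolding y_eq diag_form_uf_scale by (simp add: mult.commute)
    ultimately have "x \<in> congr_set 0 l"
      by (simp add: congr_set_def val_ideal_mult_uf_power_iff)
    then show "y \<in> uf_scale ` congr_set 0 l"
      using y_eq by blast
  qed
qed

lemma measure_congr_set_zero_step:
  assumes aniso: "\<forall>x::nat \<Rightarrow> 'a. (\<exists>i<n. x i \<noteq> 0) \<longrightarrow> diag_form n a x \<noteq> 0"
    and l: "v 2 \<le> int l"
  shows "measure M (congr_set 0 (l + 2)) = measure M (congr_set 0 l) / real (card (residue_field v)) ^ n"
  unfolding congr_set_zero_shift[OF aniso l]
  by (rule measure_uf_scale[OF ball_saturated_congr_set[of l "nat (v 2 + int l)"]]) (use val_two_pos in simp)


lemma congr_set_exists_dominant_term:
  assumes x0: "x0 \<in> congr_set (uf ^ (2 * T)) l" and l: "2 * int T + v 2 + 1 \<le> int l"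
  obtains i where "i < n" "x0 i \<noteq> 0" "0 \<le> v (x0 i)" "v (a i) + 2 * v (x0 i) \<le> 2 * int T"
proof -
  have x0V: "x0 \<in> V" and Bx0: "B x0 - uf ^ (2 * T) \<in> I (v 2 + int l)"
    using x0 by (auto simp: congr_set_def)
  have "\<exists>i<n. a i * x0 i ^ 2 \<notin> I (2 * int T + 1)"
  proof (rule ccontr)
    assume "\<not> ?thesis"
    then have "B x0 \<in> I (2 * int T + 1)"
      unfolding diag_form_def by (intro val_ideal_sum) auto
    moreover have "B x0 - uf ^ (2 * T) \<in> I (2 * int T + 1)"
      using Bx0 by (rule val_ideal_mono) (use l val_two_pos in simp)
    ultimately have "B x0 - (B x0 - uf ^ (2 * T)) \<in> I (2 * int T + 1)"
      by (rule val_ideal_diff)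
    then show False
      by (simp add: val_ideal_iff)
  qed
  then obtain i where i: "i < n" and not_in: "a i * x0 i ^ 2 \<notin> I (2 * int T + 1)"
    by blast
  have ai: "a i \<noteq> 0"
    using coeffs i by auto
  have xi: "x0 i \<noteq> 0" "0 \<le> v (x0 i)"
    using x0V i not_in by (auto simp: mem_int_vectors_iff val_ideal_iff)
  have "v (a i * x0 i ^ 2) = v (a i) + 2 * v (x0 i)"
    using val_mult[OF ai, of "x0 i ^ 2"] val_power[OF xi(1), of 2] xi by simp
  then show ?thesis
    using that i xi not_in by (auto simp: val_ideal_iff)
qed

text \<open>With \<open>s = ord (a\<^sub>i x0\<^sub>i)\<close>, take \<open>k = \<ell> - s\<close> and \<open>u = a\<^sub>i x0\<^sub>i / \<varpi>\<^sup>s\<close>: in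
  \<open>B(x + \<varpi>\<^sup>k c e\<^sub>i) - B x = 2\<varpi>\<^sup>k c a\<^sub>i x\<^sub>i + a\<^sub>i \<varpi>\<^sup>2\<^sup>k c\<^sup>2\<close> the first term is \<open>2\<varpi>\<^sup>\<ell> u c\<close>
  up to the next level because \<open>x\<close> is close to \<open>x0\<close>, and the second term is smaller.\<close>

lemma exists_linearizing_coordinate:
  assumes x0: "x0 \<in> congr_set (uf ^ (2 * T)) l" and l: "2 * int T + v 2 + 1 \<le> int l"
  obtains i k u where "i < n" "u \<noteq> 0" "v u = 0" "T + 1 \<le> k"
    "\<forall>x c. x \<in> ball x0 (T + 1) \<longrightarrow> c \<in> I 0 \<longrightarrow>
       B (x(i := x i + uf ^ k * c)) - B x - 2 * uf ^ l * u * c \<in> I (v 2 + int l + 1)"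
proof -
  obtain i where i: "i < n" and xi: "x0 i \<noteq> 0" "0 \<le> v (x0 i)"
    and bound: "v (a i) + 2 * v (x0 i) \<le> 2 * int T"
    using congr_set_exists_dominant_term[OF x0 l] by blast
  have ai: "a i \<noteq> 0" "0 \<le> v (a i)" "v (a i) \<le> 1"
    using coeffs i by auto
  define s where "s = v (a i) + v (x0 i)"
  have s: "0 \<le> s" "s \<le> int T + 1"
    using ai xi bound by (auto simp: s_def)
  define k where "k = nat (int l - s)"
  have lk: "l = k + nat s" and kT: "T + 1 \<le> k"
    using s l val_two_pos by (simp_all add: k_def)
  define u where "u = a i * x0 i / uf ^ nat s"
  have u: "u \<noteq> 0" "v u = 0"
    using ai xi s val_mult[OF ai(1) xi(1)] val_divide[of "a i * x0 i" "uf ^ nat s"]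
    by (simp_all add: u_def s_def)
  have ufu: "uf ^ l * u = uf ^ k * (a i * x0 i)"
    unfolding lk u_def by (simp add: power_add)
  show ?thesis
  proof (rule that[OF i u kT], intro allI impI)
    fix x c assume x: "x \<in> ball x0 (T + 1)" and c: "c \<in> I 0"
    have dx: "x i - x0 i \<in> I (int T + 1)"
      using x i by (simp add: mem_ball_iff add.commute)
    have "B (x(i := x i + uf ^ k * c)) - B x - 2 * uf ^ l * u * c
        = a i * ((x i + uf ^ k * c) ^ 2 - x i ^ 2) - 2 * c * (uf ^ k * (a i * x0 i))"
      using diag_form_update[OF i] ufu by (simp add: mult_ac)
    also have "\<dots> = 2 * uf ^ k * c * a i * (x i - x0 i) + a i * uf ^ k * uf ^ k * c * c"
      by (simp add: algebra_simps power2_eq_square)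
    also have "\<dots> \<in> I (v 2 + int l + 1)"
    proof (rule val_ideal_add)
      have "2 * uf ^ k * c * a i * (x i - x0 i) \<in> I (v 2 + int k + 0 + v (a i) + (int T + 1))"
        using c dx by (intro val_ideal_mult in_val_ideal_val uf_power_in_val_ideal)
      then show "2 * uf ^ k * c * a i * (x i - x0 i) \<in> I (v 2 + int l + 1)"
        by (rule val_ideal_mono) (use lk s bound ai xi in \<open>simp add: s_def\<close>)
      have "a i * uf ^ k * uf ^ k * c * c \<in> I (v (a i) + int k + int k + 0 + 0)"
        using c by (intro val_ideal_mult in_val_ideal_val uf_power_in_val_ideal)
      then show "a i * uf ^ k * uf ^ k * c * c \<in> I (v 2 + int l + 1)"
        by (rule val_ideal_mono) (use lk s l ai xi bound in \<open>simp add: s_def\<close>)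
    qed
    finally show "B (x(i := x i + uf ^ k * c)) - B x - 2 * uf ^ l * u * c \<in> I (v 2 + int l + 1)" .
  qed
qed

text \<open>The fibre of \<open>congr_set (\<varpi>\<^sup>2\<^sup>T) \<ell>\<close> on which \<open>(B x - \<varpi>\<^sup>2\<^sup>T) / 2\<varpi>\<^sup>\<ell> \<equiv> r\<close> modulo \<open>\<varpi>\<close>.\<close>

definition congr_fibre :: "nat \<Rightarrow> nat \<Rightarrow> 'a \<Rightarrow> (nat \<Rightarrow> 'a) set" where
  "congr_fibre T l r = congr_set (uf ^ (2 * T) + 2 * uf ^ l * r) (l + 1)"

lemma congr_fibre_in_sets: "congr_fibre T l r \<in> sets M"
  unfolding congr_fibre_def by (rule congr_set_in_sets)

lemma congr_fibre_subset:
  assumes r: "r \<in> I 0"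
  shows "congr_fibre T l r \<subseteq> congr_set (uf ^ (2 * T)) l"
proof
  fix x assume x: "x \<in> congr_fibre T l r"
  then have "B x - (uf ^ (2 * T) + 2 * uf ^ l * r) \<in> I (v 2 + int l)"
    unfolding congr_fibre_def congr_set_def by (auto elim: val_ideal_mono)
  moreover have "2 * uf ^ l * r \<in> I (v 2 + int l)"
    using two_uf_power_mult_in_val_ideal[OF r, of l] by simp
  ultimately have "B x - (uf ^ (2 * T) + 2 * uf ^ l * r) + 2 * uf ^ l * r \<in> I (v 2 + int l)"
    by (rule val_ideal_add)
  then show "x \<in> congr_set (uf ^ (2 * T)) l"
    using x by (simp add: congr_fibre_def congr_set_def)
qed

lemma congr_set_eq_Union_fibres:
  "congr_set (uf ^ (2 * T)) l = (\<Union>r\<in>residue_reps. congr_fibre T l r)"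
proof
  show "(\<Union>r\<in>residue_reps. congr_fibre T l r) \<subseteq> congr_set (uf ^ (2 * T)) l"
    using congr_fibre_subset residue_reps_subset by blast
  show "congr_set (uf ^ (2 * T)) l \<subseteq> (\<Union>r\<in>residue_reps. congr_fibre T l r)"
  proof
    fix x assume x: "x \<in> congr_set (uf ^ (2 * T)) l"
    define t where "t = (B x - uf ^ (2 * T)) / (2 * uf ^ l)"
    have xt: "B x - uf ^ (2 * T) = t * (2 * uf ^ l)"
      using two_uf_power_nonzero by (simp add: t_def)
    have "t \<in> I 0"
      using x xt val_ideal_mult_right_iff[OF two_uf_power_nonzero, of t]
      by (simp add: congr_set_def val_two_uf_power)
    then obtain r where r: "r \<in> residue_reps" "t - r \<in> I 1"
      by (rule residue_reps_cover)
    have "B x - (uf ^ (2 * T) + 2 * uf ^ l * r) = (t - r) * (2 * uf ^ l)"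
      using xt by (simp add: algebra_simps)
    then have "x \<in> congr_fibre T l r"
      using x r val_ideal_mult_right_iff[OF two_uf_power_nonzero, of "t - r"]
      by (simp add: congr_fibre_def congr_set_def val_two_uf_power add_ac)
    then show "x \<in> (\<Union>r\<in>residue_reps. congr_fibre T l r)"
      using r by blast
  qed
qed

lemma disjoint_congr_fibres: "disjoint_family_on (congr_fibre T l) residue_reps"
  unfolding disjoint_family_on_def
proof (intro ballI impI)
  fix r r' assume r: "r \<in> residue_reps" "r' \<in> residue_reps" "r \<noteq> r'"
  show "congr_fibre T l r \<inter> congr_fibre T l r' = {}"
  proof (rule ccontr)
    assume "congr_fibre T l r \<inter> congr_fibre T l r' \<noteq> {}"
    then obtain x where "B x - (uf ^ (2 * T) + 2 * uf ^ l * r) \<in> I (v 2 + int (l + 1))"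
      "B x - (uf ^ (2 * T) + 2 * uf ^ l * r') \<in> I (v 2 + int (l + 1))"
      by (auto simp: congr_fibre_def congr_set_def)
    then have "(B x - (uf ^ (2 * T) + 2 * uf ^ l * r)) - (B x - (uf ^ (2 * T) + 2 * uf ^ l * r'))
        \<in> I (v 2 + int (l + 1))"
      by (rule val_ideal_diff)
    then have "(r' - r) * (2 * uf ^ l) \<in> I (v 2 + int (l + 1))"
      by (simp add: algebra_simps)
    then have "r' - r \<in> I 1"
      unfolding val_ideal_mult_right_iff[OF two_uf_power_nonzero] val_two_uf_power by simp
    then show False
      using residue_reps_unique r by fastforce
  qed
qed

lemma congr_fibre_zero:
  assumes "r \<in> I 1"
  shows "congr_fibre T l r = congr_set (uf ^ (2 * T)) (l + 1)"
proof -
  have small: "2 * uf ^ l * r \<in> I (v 2 + int (l + 1))"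
    using two_uf_power_mult_in_val_ideal[OF assms, of l] by (simp add: add_ac)
  have "B x - (uf ^ (2 * T) + 2 * uf ^ l * r) \<in> I (v 2 + int (l + 1)) \<longleftrightarrow>
        B x - uf ^ (2 * T) \<in> I (v 2 + int (l + 1))" for x
    using val_ideal_add[OF _ small, of "B x - (uf ^ (2 * T) + 2 * uf ^ l * r)"]
      val_ideal_diff[OF _ small, of "B x - uf ^ (2 * T)"]
    by (auto simp: algebra_simps)
  then show ?thesis
    unfolding congr_fibre_def congr_set_def by blast
qed

definition coord_vector :: "nat \<Rightarrow> nat \<Rightarrow> 'a \<Rightarrow> (nat \<Rightarrow> 'a)" where
  "coord_vector i k c = (\<lambda>j\<in>{..<n}. if j = i then uf ^ k * c else 0)"

lemma coord_vector_in_int_vectors: "c \<in> I 0 \<Longrightarrow> coord_vector i k c \<in> V"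
  by (auto simp: coord_vector_def mem_int_vectors_iff intro: uf_power_mult_in_val_ring)

lemma translate_coord_vector:
  "x \<in> V \<Longrightarrow> i < n \<Longrightarrow> translate (coord_vector i k c) x = x(i := x i + uf ^ k * c)"
  by (auto simp: translate_def coord_vector_def mem_int_vectors_iff fun_eq_iff)

lemma translate_mem_congr_fibre:
  assumes i: "i < n" and k: "T + 1 \<le> k"
    and lin: "\<forall>x c. x \<in> ball x0 (T + 1) \<longrightarrow> c \<in> I 0 \<longrightarrow>
       B (x(i := x i + uf ^ k * c)) - B x - 2 * uf ^ l * u * c \<in> I (v 2 + int l + 1)"
    and x: "x \<in> congr_fibre T l s \<inter> ball x0 (T + 1)" and d: "d \<in> I 0"
  shows "translate (coord_vector i k d) x \<in> congr_fibre T l (s + u * d) \<inter> ball x0 (T + 1)"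
proof -
  have xV: "x \<in> V"
    using x by (simp add: mem_ball_iff)
  have y_eq: "translate (coord_vector i k d) x = x(i := x i + uf ^ k * d)"
    by (rule translate_coord_vector[OF xV i])
  have yV: "translate (coord_vector i k d) x \<in> V"
    by (rule translate_in_int_vectors[OF coord_vector_in_int_vectors[OF d] xV])
  have "uf ^ k * d \<in> I (int T + 1)"
    using uf_power_mult_in_val_ideal[OF d, of k] by (rule val_ideal_mono) (use k in simp)
  then have "(x(i := x i + uf ^ k * d)) j - x0 j \<in> I (int (T + 1))" if "j < n" for j
    using x that val_ideal_add[of "x i - x0 i" "int T + 1" "uf ^ k * d"]
    by (cases "j = i") (auto simp: mem_ball_iff algebra_simps)
  then have in_ball: "translate (coord_vector i k d) x \<in> ball x0 (T + 1)"
    using yV y_eq by (simp add: mem_ball_iff)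
  have "B x - (uf ^ (2 * T) + 2 * uf ^ l * s) \<in> I (v 2 + int l + 1)"
    using x by (simp add: congr_fibre_def congr_set_def add_ac)
  moreover have "B (x(i := x i + uf ^ k * d)) - B x - 2 * uf ^ l * u * d \<in> I (v 2 + int l + 1)"
    using x d lin by simp
  ultimately have "(B x - (uf ^ (2 * T) + 2 * uf ^ l * s))
      + (B (x(i := x i + uf ^ k * d)) - B x - 2 * uf ^ l * u * d) \<in> I (v 2 + int l + 1)"
    by (rule val_ideal_add)
  moreover have "(B x - (uf ^ (2 * T) + 2 * uf ^ l * s))
      + (B (x(i := x i + uf ^ k * d)) - B x - 2 * uf ^ l * u * d)
      = B (x(i := x i + uf ^ k * d)) - (uf ^ (2 * T) + 2 * uf ^ l * (s + u * d))"
    by (simp add: algebra_simps)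
  ultimately have "B (x(i := x i + uf ^ k * d)) - (uf ^ (2 * T) + 2 * uf ^ l * (s + u * d)) \<in> I (v 2 + int l + 1)"
    by simp
  then show ?thesis
    using yV y_eq in_ball by (simp add: congr_fibre_def congr_set_def add_ac)
qed

lemma translate_congr_fibre_Int_ball:
  assumes i: "i < n" and k: "T + 1 \<le> k"
    and lin: "\<forall>x c. x \<in> ball x0 (T + 1) \<longrightarrow> c \<in> I 0 \<longrightarrow>
       B (x(i := x i + uf ^ k * c)) - B x - 2 * uf ^ l * u * c \<in> I (v 2 + int l + 1)"
    and c: "c \<in> I 0"
  shows "translate (coord_vector i k c) ` (congr_fibre T l r \<inter> ball x0 (T + 1))
      = congr_fibre T l (r + u * c) \<inter> ball x0 (T + 1)" (is "?f ` ?A = ?A'")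
proof
  note step = translate_mem_congr_fibre[OF i k lin]
  show "?f ` ?A \<subseteq> ?A'"
    using step[OF _ c] by blast
  show "?A' \<subseteq> ?f ` ?A"
  proof
    fix y assume y: "y \<in> ?A'"
    let ?x = "translate (coord_vector i k (- c)) y"
    have x: "?x \<in> ?A"
      using step[OF y, of "- c"] c by simp
    have "y \<in> V" "?x \<in> V"
      using x y by (simp_all add: mem_ball_iff)
    then have e1: "?x = y(i := y i + uf ^ k * (- c))" and e2: "?f ?x = ?x(i := ?x i + uf ^ k * c)"
      using i by (simp_all only: translate_coord_vector)
    have "?f ?x = y"
      unfolding e2 by (subst e1)+ (auto simp: fun_eq_iff)
    with x show "y \<in> ?f ` ?A"
      by (metis image_eqI)
  qed
qed

text \<open>On each ball of radius \<open>T + 1\<close> the translation by \<open>\<varpi>\<^sup>k (r' - r)/u\<close> in the linearizing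
  coordinate carries the fibre over \<open>r\<close> onto the fibre over \<open>r'\<close>.\<close>

lemma measure_congr_fibre_Int_ball:
  assumes l: "2 * int T + v 2 + 1 \<le> int l" and r: "r \<in> I 0" "r' \<in> I 0"
  shows "measure M (congr_fibre T l r \<inter> ball p (T + 1)) = measure M (congr_fibre T l r' \<inter> ball p (T + 1))"
proof (cases "congr_set (uf ^ (2 * T)) l \<inter> ball p (T + 1) = {}")
  case True
  then have "congr_fibre T l r \<inter> ball p (T + 1) = {}" "congr_fibre T l r' \<inter> ball p (T + 1) = {}"
    using congr_fibre_subset[OF r(1), of T l] congr_fibre_subset[OF r(2), of T l] by blast+
  then show ?thesis
    by simp
next
  case False
  then obtain x0 where x0: "x0 \<in> congr_set (uf ^ (2 * T)) l" "x0 \<in> ball p (T + 1)"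
    by blast
  obtain i k u where i: "i < n" and u: "u \<noteq> 0" "v u = 0" and k: "T + 1 \<le> k"
    and lin: "\<forall>x c. x \<in> ball x0 (T + 1) \<longrightarrow> c \<in> I 0 \<longrightarrow>
       B (x(i := x i + uf ^ k * c)) - B x - 2 * uf ^ l * u * c \<in> I (v 2 + int l + 1)"
    using exists_linearizing_coordinate[OF x0(1) l] by metis
  define c where "c = (r' - r) / u"
  have uc: "u * c = r' - r"
    using u by (simp add: c_def)
  have c: "c \<in> I 0"
    using val_ideal_diff[OF r(2,1)] uc val_ideal_mult_right_iff[OF u(1), of c] u(2)
    by (simp add: mult.commute)
  have ball_eq: "ball p (T + 1) = ball x0 (T + 1)"
    using ball_eq_of_mem[OF x0(2)] by simp
  have "congr_fibre T l r \<inter> ball x0 (T + 1) \<in> sets M"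
    using congr_fibre_in_sets ball_in_sets[of x0] x0 by (auto simp: mem_ball_iff)
  note preserved = measure_translate[OF this coord_vector_in_int_vectors[OF c, of i k]]
  have "translate (coord_vector i k c) ` (congr_fibre T l r \<inter> ball x0 (T + 1))
      = congr_fibre T l r' \<inter> ball x0 (T + 1)"
    using translate_congr_fibre_Int_ball[OF i k lin c, of r] uc by simp
  then show ?thesis
    using preserved unfolding ball_eq by simp
qed

lemma measure_congr_fibre_eq:
  assumes l: "2 * int T + v 2 + 1 \<le> int l" and r: "r \<in> I 0" "r' \<in> I 0"
  shows "measure M (congr_fibre T l r) = measure M (congr_fibre T l r')"
proof -
  have "measure M (congr_fibre T l r) = (\<Sum>C\<in>balls_of (T + 1) V. measure M (congr_fibre T l r \<inter> C))"
    by (rule measure_eq_sum_Int_balls[OF congr_fibre_in_sets])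
  also have "\<dots> = (\<Sum>C\<in>balls_of (T + 1) V. measure M (congr_fibre T l r' \<inter> C))"
  proof (rule sum.cong[OF refl])
    fix C assume "C \<in> balls_of (T + 1) V"
    then obtain p where "p \<in> V" "C = ball p (T + 1)"
      by (auto simp: balls_of_def)
    then show "measure M (congr_fibre T l r \<inter> C) = measure M (congr_fibre T l r' \<inter> C)"
      using measure_congr_fibre_Int_ball[OF l r] by simp
  qed
  also have "\<dots> = measure M (congr_fibre T l r')"
    by (rule measure_eq_sum_Int_balls[OF congr_fibre_in_sets, symmetric])
  finally show ?thesis .
qed

lemma measure_congr_set_unit_step:
  assumes l: "2 * int T + v 2 + 1 \<le> int l"
  shows "measure M (congr_set (uf ^ (2 * T)) (l + 1))
       = measure M (congr_set (uf ^ (2 * T)) l) / real (card (residue_field v))"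
proof -
  obtain r0 where "r0 \<in> residue_reps" "0 - r0 \<in> I 1"
    using residue_reps_cover[of 0] by auto
  then have r0: "r0 \<in> I 0" "r0 \<in> I 1"
    using residue_reps_subset by auto
  have fibre: "measure M (congr_fibre T l r) = measure M (congr_set (uf ^ (2 * T)) (l + 1))"
    if "r \<in> residue_reps" for r
  proof -
    have "measure M (congr_fibre T l r) = measure M (congr_fibre T l r0)"
      using that residue_reps_subset r0(1) by (intro measure_congr_fibre_eq[OF l]) auto
    then show ?thesis
      unfolding congr_fibre_zero[OF r0(2)] .
  qed
  have "measure M (congr_set (uf ^ (2 * T)) l) = (\<Sum>r\<in>residue_reps. measure M (congr_fibre T l r))"
    unfolding congr_set_eq_Union_fibres
    using finite_residue_reps disjoint_congr_fibres congr_fibre_in_sets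
    by (intro measure_finite_Union emeasure_finite) auto
  also have "\<dots> = card (residue_field v) * measure M (congr_set (uf ^ (2 * T)) (l + 1))"
    using fibre card_residue_reps by simp
  finally show ?thesis
    using card_residue_field_ge_2 by simp
qed

lemma XB_unit_step:
  "\<forall>l\<ge>2 * T + nat (v 2) + 1. XB v uf n a M (uf ^ (2 * T)) (l + 1)
     = XB v uf n a M (uf ^ (2 * T)) l / card (residue_field v)"
proof (intro allI impI)
  fix l assume "2 * T + nat (v 2) + 1 \<le> l"
  then have "2 * int T + v 2 + 1 \<le> int l"
    using val_two_pos by linarith
  then show "XB v uf n a M (uf ^ (2 * T)) (l + 1) = XB v uf n a M (uf ^ (2 * T)) l / card (residue_field v)"
    unfolding XB_eq_measure_congr_set by (rule measure_congr_set_unit_step)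
qed

lemma XB_zero_step:
  assumes "\<forall>x::nat \<Rightarrow> 'a. (\<exists>i<n. x i \<noteq> 0) \<longrightarrow> diag_form n a x \<noteq> 0"
  shows "\<forall>l\<ge>nat (v 2). XB v uf n a M 0 (l + 2) = XB v uf n a M 0 l / real (card (residue_field v)) ^ n"
proof (intro allI impI)
  fix l assume "nat (v 2) \<le> l"
  then have "v 2 \<le> int l"
    using val_two_pos by linarith
  then show "XB v uf n a M 0 (l + 2) = XB v uf n a M 0 l / real (card (residue_field v)) ^ n"
    unfolding XB_eq_measure_congr_set by (rule measure_congr_set_zero_step[OF assms])
qed

end

theorem proposition2p4:
  fixes v :: "'a::field \<Rightarrow> int" and uf :: 'a and q n T :: nat
    and a :: "nat \<Rightarrow> 'a" and M :: "(nat \<Rightarrow> 'a) measure" and \<beta> :: complex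
  assumes lf: "nonarch_local_field v"
    and two_nz: "(2::'a) \<noteq> 0"
    and res2: "(2::'a) \<in> val_ideal v 1"
    and unif: "uf \<noteq> 0" "v uf = 1"
    and q_def: "q = card (residue_field v)"
    and coeffs: "\<forall>i<n. a i \<noteq> 0 \<and> 0 \<le> v (a i) \<and> v (a i) \<le> 1"
    and aniso: "\<forall>x::nat \<Rightarrow> 'a. (\<exists>i<n. x i \<noteq> 0) \<longrightarrow> diag_form n a x \<noteq> 0"
    and haar: "haar_prob v n M"
    and beta: "0 < Re \<beta>"
  defines "z \<equiv> (of_nat q :: complex) powr (- \<beta>)"
    and "w \<equiv> (of_nat q :: complex) powr (- \<beta>) / of_nat q"
    and "u \<equiv> ((of_nat q :: complex) powr (- \<beta>)) ^ 2 / of_nat q ^ n"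
    and "e \<equiv> nat (v 2)"
  shows "(\<lambda>l. z ^ l * of_real (XB v uf n a M (uf ^ (2 * T)) l)) sums
           ((\<Sum>l<2 * T + e + 1. z ^ l * of_real (XB v uf n a M (uf ^ (2 * T)) l))
            + z ^ (2 * T + e + 1) / (1 - w) * of_real (XB v uf n a M (uf ^ (2 * T)) (2 * T + e + 1)))
       \<and> (\<lambda>l. z ^ l * of_real (XB v uf n a M 0 l)) sums
           ((\<Sum>l<e. z ^ l * of_real (XB v uf n a M 0 l))
            + z ^ e / (1 - u) * of_real (XB v uf n a M 0 e)
            + z ^ (e + 1) / (1 - u) * of_real (XB v uf n a M 0 (e + 1)))"
proof -
  have v2: "1 \<le> v 2"
    using res2 two_nz by (simp add: val_ideal_def)
  interpret diagonal_form v uf n M a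
    using lf unif haar coeffs two_nz v2 by unfold_locales (auto simp: nonarch_local_field_def)
  have q: "2 \<le> q"
    using card_residue_field_ge_2 q_def by simp
  have "norm z = real q powr (- Re \<beta>)"
    unfolding z_def by (subst norm_powr_real_powr) auto
  also have "\<dots> < 1"
    using q beta by (intro powr_less_one) auto
  finally have z: "norm z < 1" .
  have q1: "1 \<le> real q" "1 \<le> real q ^ n"
    using q by simp_all
  have "\<forall>l\<ge>2 * T + e + 1. XB v uf n a M (uf ^ (2 * T)) (l + 1) = XB v uf n a M (uf ^ (2 * T)) l / q"
    using XB_unit_step[of T] by (simp add: e_def q_def)
  from sums_eventually_periodic_geometric[OF z q1(1) _ measure_congr_set_bounded this]
  have unit: "(\<lambda>l. z ^ l * of_real (XB v uf n a M (uf ^ (2 * T)) l)) sums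
           ((\<Sum>l<2 * T + e + 1. z ^ l * of_real (XB v uf n a M (uf ^ (2 * T)) l))
            + z ^ (2 * T + e + 1) / (1 - w) * of_real (XB v uf n a M (uf ^ (2 * T)) (2 * T + e + 1)))"
    by (simp add: w_def z_def)
  have "\<forall>l\<ge>e. XB v uf n a M 0 (l + 2) = XB v uf n a M 0 l / real q ^ n"
    using XB_zero_step[OF aniso] by (simp add: e_def q_def)
  from sums_eventually_periodic_geometric[OF z q1(2) _ measure_congr_set_bounded this]
  have "(\<lambda>l. z ^ l * of_real (XB v uf n a M 0 l)) sums
           ((\<Sum>l<e. z ^ l * of_real (XB v uf n a M 0 l))
            + z ^ e / (1 - u) * of_real (XB v uf n a M 0 e)
            + z ^ (e + 1) / (1 - u) * of_real (XB v uf n a M 0 (e + 1)))"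
    by (simp add: u_def z_def numeral_2_eq_2 add_divide_distrib add.assoc)
  with unit show ?thesis ..
qed

end
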